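(* Let $D\ge2$, let $\eta_{\mu\nu}$ be a nondegenerate symmetric bilinear form on $\mathbb{R}^D$ with inverse $\eta^{\mu\nu}$, and let $a_{\mu\nu\rho\lambda}$ be a real tensor on $\mathbb{R}^D$ satisfying $$a_{\mu\nu\rho\lambda}=-a_{\nu\mu\rho\lambda}=-a_{\mu\nu\lambda\rho}=a_{\rho\lambda\mu\nu},\qquad a_{\mu\nu\rho\lambda}+a_{\mu\rho\lambda\nu}+a_{\mu\lambda\nu\rho}=0.$$ Suppose that for all $u,v\in\mathbb{R}^D$, $$a_{\mu\rho\nu\lambda}\,\eta^{\mu\nu}v^\rho v^\lambda\,(u\cdot v)^2+a_{\mu\rho\nu\lambda}\,u^\mu u^\nu v^\rho v^\lambda\,(v\cdot v)=0,$$ where $u\cdot v=\eta_{\alpha\beta}u^\alpha v^\beta$. Then $a_{\mu\nu\rho\lambda}=0$.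
   Context: This polynomial identity is the condition (in the variables $u^\mu=\partial_zX^\mu$, $v^\mu=\partial_{\bar z}X^\mu$) for the operator $:\!\big(a_{\mu\nu\rho\lambda}\partial_zX^\mu\partial_{\bar z}X^\nu\partial_zX^\rho\partial_{\bar z}X^\lambda\big)/\big(\eta_{\alpha\beta}\partial_zX^\alpha\partial_{\bar z}X^\beta\big)\!:$ in the free boson theory with target metric $\eta$ to be a conformal primary, i.e. the condition $\eta^{\mu\nu}\partial^2F/\partial u^\mu\partial u^\nu=0$ for $F(u,v)=a_{\mu\rho\nu\lambda}u^\mu u^\nu v^\rho v^\lambda/(u\cdot v)$. The symmetry conditions on $a$ are those of an areal metric (perturbation) with the cyclicity condition. *)

theory Defs
  imports "HOL-Analysis.Analysis"
begin

definition eta_dot :: "real^'n^'n \<Rightarrow> real^'n \<Rightarrow> real^'n \<Rightarrow> real" where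
  "eta_dot eta u v = (\<Sum>\<alpha>\<in>UNIV. \<Sum>\<beta>\<in>UNIV. eta $ \<alpha> $ \<beta> * u $ \<alpha> * v $ \<beta>)"

end

theory Submission
  imports Defs "HOL-Computational_Algebra.Polynomial"
begin

text \<open>Putting u = v in the identity and using a(v,v,v,v) = 0 kills the contraction term at every
  non-isotropic v, so the quadratic form a(u,v,u,v) vanishes whenever v.v \<noteq> 0. A line through v
  in the direction of a non-isotropic w meets the null cone in at most two points, so by continuity
  a(u,v,u,v) vanishes identically. As for curvature tensors in Riemannian geometry, these
  "sectional" values determine a tensor with the symmetries of a: polarization and the cyclic
  identity give 3a = 0.\<close>

definition tensor4 ::
    "('n::finite \<Rightarrow> 'n \<Rightarrow> 'n \<Rightarrow> 'n \<Rightarrow> real) \<Rightarrow> real^'n \<Rightarrow> real^'n \<Rightarrow> real^'n \<Rightarrow> real^'n \<Rightarrow> real" where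
  "tensor4 a x y z w =
    (\<Sum>i\<in>UNIV. \<Sum>j\<in>UNIV. \<Sum>k\<in>UNIV. \<Sum>l\<in>UNIV. a i j k l * x$i * y$j * z$k * w$l)"

lemma tensor4_add1: "tensor4 a (x + x') y z w = tensor4 a x y z w + tensor4 a x' y z w"
  unfolding tensor4_def by (simp add: sum.distrib[symmetric] algebra_simps)

lemma tensor4_add2: "tensor4 a x (y + y') z w = tensor4 a x y z w + tensor4 a x y' z w"
  unfolding tensor4_def by (simp add: sum.distrib[symmetric] algebra_simps)

lemma tensor4_add3: "tensor4 a x y (z + z') w = tensor4 a x y z w + tensor4 a x y z' w"
  unfolding tensor4_def by (simp add: sum.distrib[symmetric] algebra_simps)

lemma tensor4_add4: "tensor4 a x y z (w + w') = tensor4 a x y z w + tensor4 a x y z w'"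
  unfolding tensor4_def by (simp add: sum.distrib[symmetric] algebra_simps)

lemma axis_1_nth: "axis i (1::real) $ k = (if k = i then 1 else 0)"
  by (simp add: axis_def)

lemma tensor4_axis: "tensor4 a (axis i 1) (axis j 1) (axis k 1) (axis l 1) = a i j k l"
  unfolding tensor4_def axis_1_nth
  by (simp add: if_distrib[where f="\<lambda>x. x * _"] if_distrib[where f="\<lambda>x. _ * x"] cong: if_cong)

lemma tensor4_swap12:
  assumes "\<And>i j k l. a i j k l = - a j i k l"
  shows "tensor4 a x y z w = - tensor4 a y x z w"
proof -
  have "tensor4 a x y z w =
      (\<Sum>j\<in>UNIV. \<Sum>i\<in>UNIV. \<Sum>k\<in>UNIV. \<Sum>l\<in>UNIV. a i j k l * x$i * y$j * z$k * w$l)"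
    unfolding tensor4_def by (rule sum.swap)
  also have "\<dots> = (\<Sum>j\<in>UNIV. \<Sum>i\<in>UNIV. \<Sum>k\<in>UNIV. \<Sum>l\<in>UNIV. - (a j i k l * y$j * x$i * z$k * w$l))"
    by (intro sum.cong refl) (subst assms, simp)
  also have "\<dots> = - tensor4 a y x z w"
    unfolding tensor4_def by (simp add: sum_negf)
  finally show ?thesis .
qed

lemma continuous_on_tensor4_sectional: "continuous_on UNIV (\<lambda>v. tensor4 a u v u v)"
  unfolding tensor4_def by (intro continuous_intros)

lemma algebraic_curvature_tensor_eq_0:
  assumes anti: "\<And>i j k l. a i j k l = - a i j l k"
    and pair_sym: "\<And>i j k l. a i j k l = a k l i j"
    and cyclic: "\<And>i j k l. a i j k l + a i k l j + a i l j k = 0"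
    and sectional: "\<And>u v. tensor4 a u v u v = 0"
  shows "a i j k l = 0"
proof -
  have polar1: "tensor4 a u v x v + tensor4 a x v u v = 0" for u v x
    using sectional[of "u + x" v] sectional[of u v] sectional[of x v]
    by (simp add: tensor4_add1 tensor4_add3)
  have polar2: "tensor4 a u v x y + tensor4 a u y x v + tensor4 a x v u y + tensor4 a x y u v = 0"
    for u v x y
    using polar1[of u "v + y" x] polar1[of u v x] polar1[of u y x]
    by (simp add: tensor4_add2 tensor4_add4 algebra_simps)
  have swap24: "a i j k l = - a i l k j" for i j k l
    using polar2[of "axis i 1" "axis j 1" "axis k 1" "axis l 1"] pair_sym[of k j i l] pair_sym[of k l i j]
    by (simp add: tensor4_axis)
  show ?thesis
    using cyclic[of i j k l] swap24[of i k l j] swap24[of i j k l] anti[of i j l k] anti[of i l k j]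
    by simp
qed

lemma eta_dot_add_left: "eta_dot eta (x + x') y = eta_dot eta x y + eta_dot eta x' y"
  unfolding eta_dot_def by (simp add: sum.distrib[symmetric] algebra_simps)

lemma eta_dot_add_right: "eta_dot eta x (y + y') = eta_dot eta x y + eta_dot eta x y'"
  unfolding eta_dot_def by (simp add: sum.distrib[symmetric] algebra_simps)

lemma eta_dot_scaleR_left: "eta_dot eta (c *\<^sub>R x) y = c * eta_dot eta x y"
  unfolding eta_dot_def by (simp add: sum_distrib_left algebra_simps)

lemma eta_dot_scaleR_right: "eta_dot eta x (c *\<^sub>R y) = c * eta_dot eta x y"
  unfolding eta_dot_def by (simp add: sum_distrib_left algebra_simps)

lemma eta_dot_axis: "eta_dot eta (axis i 1) (axis j 1) = eta $ i $ j"
  unfolding eta_dot_def axis_1_nth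
  by (simp add: if_distrib[where f="\<lambda>x. x * _"] if_distrib[where f="\<lambda>x. _ * x"] cong: if_cong)

lemma eta_dot_commute:
  assumes "transpose eta = eta"
  shows "eta_dot eta x y = eta_dot eta y x"
proof -
  have "eta $ i $ j = eta $ j $ i" for i j
    using arg_cong[OF assms, of "\<lambda>M. M $ i $ j"] by (simp add: transpose_def)
  then show ?thesis
    unfolding eta_dot_def by (subst sum.swap) (simp add: mult_ac)
qed

lemma eta_dot_line:
  assumes "transpose eta = eta"
  shows "eta_dot eta (v + t *\<^sub>R w) (v + t *\<^sub>R w) =
    eta_dot eta v v + 2 * eta_dot eta v w * t + eta_dot eta w w * t\<^sup>2"
  using eta_dot_commute[OF assms, of w v]
  by (simp add: eta_dot_add_left eta_dot_add_right eta_dot_scaleR_left eta_dot_scaleR_right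
      power2_eq_square algebra_simps)

lemma invertible_nonzero:
  fixes A :: "real^'n^'n"
  assumes "invertible A"
  shows "A \<noteq> 0"
proof
  assume "A = 0"
  with assms have "(mat 1 :: real^'n^'n) = 0" by (simp add: invertible_def)
  then have "(mat 1 :: real^'n^'n) $ i $ i = 0" for i by simp
  then show False by (simp add: mat_def)
qed

lemma exists_nonisotropic:
  assumes "transpose eta = eta" and "eta \<noteq> 0"
  shows "\<exists>w. eta_dot eta w w \<noteq> 0"
proof (rule ccontr)
  assume "\<nexists>w. eta_dot eta w w \<noteq> 0"
  then have isotropic: "eta_dot eta w w = 0" for w by blast
  have "eta $ i $ j = 0" for i j
    using isotropic[of "axis i 1 + axis j 1"] isotropic[of "axis i 1"] isotropic[of "axis j 1"]
      eta_dot_commute[OF assms(1), of "axis i 1" "axis j 1"]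
    by (simp add: eta_dot_add_left eta_dot_add_right eta_dot_axis)
  with assms(2) show False by (simp add: vec_eq_iff)
qed

lemma finite_quadratic_roots:
  fixes c :: real
  assumes "c \<noteq> 0"
  shows "finite {t. p + q * t + c * t\<^sup>2 = 0}"
proof -
  have "[:p, q, c:] \<noteq> 0" using assms by simp
  from poly_roots_finite[OF this] show ?thesis
    by (simp add: algebra_simps power2_eq_square)
qed

lemma continuous_eq_0_off_finite:
  fixes f :: "'a::{perfect_space,t1_space} \<Rightarrow> 'b::{t2_space,zero}"
  assumes "continuous_on UNIV f" and "finite S" and "\<And>t. t \<notin> S \<Longrightarrow> f t = 0"
  shows "f x = 0"
proof -
  have "eventually (\<lambda>t. t \<notin> S) (at x)"
    using islimpt_finite[OF assms(2)] by (simp add: islimpt_iff_eventually)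
  then have "(f \<longlongrightarrow> 0) (at x)"
    by (intro tendsto_eventually) (auto elim: eventually_mono simp: assms(3))
  moreover have "(f \<longlongrightarrow> f x) (at x)"
    using assms(1) by (simp add: continuous_on_def)
  ultimately show ?thesis by (metis at_neq_bot tendsto_unique)
qed

lemma continuous_eq_0_if_eq_0_on_nonisotropic:
  fixes f :: "real^'n \<Rightarrow> real"
  assumes sym: "transpose eta = eta" and w: "eta_dot eta w w \<noteq> 0"
    and cont: "continuous_on UNIV f"
    and nonisotropic: "\<And>v. eta_dot eta v v \<noteq> 0 \<Longrightarrow> f v = 0"
  shows "f v = 0"
proof -
  have "continuous_on UNIV (\<lambda>t. f (v + t *\<^sub>R w))"
    by (intro continuous_on_compose2[OF cont] continuous_intros) auto
  moreover have "finite {t. eta_dot eta (v + t *\<^sub>R w) (v + t *\<^sub>R w) = 0}"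
    using finite_quadratic_roots[OF w] by (simp add: eta_dot_line[OF sym])
  ultimately have "f (v + 0 *\<^sub>R w) = 0"
    by (rule continuous_eq_0_off_finite[where f="\<lambda>t. f (v + t *\<^sub>R w)"]) (simp add: nonisotropic)
  then show ?thesis by simp
qed

theorem mainTheorem9:
  fixes eta :: "real^'n^'n" and a :: "'n \<Rightarrow> 'n \<Rightarrow> 'n \<Rightarrow> 'n \<Rightarrow> real"
  assumes dim: "CARD('n) \<ge> 2"
    and sym: "transpose eta = eta"
    and nondeg: "invertible eta"
    and anti1: "\<And>m n r l. a m n r l = - a n m r l"
    and anti2: "\<And>m n r l. a m n r l = - a m n l r"
    and pairsym: "\<And>m n r l. a m n r l = a r l m n"
    and cyclic: "\<And>m n r l. a m n r l + a m r l n + a m l n r = 0"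
    and ident: "\<And>u v :: real^'n.
      (\<Sum>m\<in>UNIV. \<Sum>r\<in>UNIV. \<Sum>n\<in>UNIV. \<Sum>l\<in>UNIV.
          a m r n l * (matrix_inv eta $ m $ n) * v $ r * v $ l)
        * (eta_dot eta u v)^2
      + (\<Sum>m\<in>UNIV. \<Sum>r\<in>UNIV. \<Sum>n\<in>UNIV. \<Sum>l\<in>UNIV.
          a m r n l * u $ m * u $ n * v $ r * v $ l)
        * eta_dot eta v v = 0"
  shows "\<forall>m n r l. a m n r l = 0"
proof -
  define T where "T v = (\<Sum>m\<in>UNIV. \<Sum>r\<in>UNIV. \<Sum>n\<in>UNIV. \<Sum>l\<in>UNIV.
      a m r n l * (matrix_inv eta $ m $ n) * v $ r * v $ l)" for v :: "real^'n"
  have sectional_ident: "T v * (eta_dot eta u v)\<^sup>2 + tensor4 a u v u v * eta_dot eta v v = 0" for u v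
    using ident[of v u] by (simp add: T_def tensor4_def mult_ac)
  have nonisotropic: "tensor4 a u v u v = 0" if "eta_dot eta v v \<noteq> 0" for u v
  proof -
    have "tensor4 a v v v v = 0"
      using tensor4_swap12[OF anti1, where x=v and y=v and z=v and w=v] by simp
    then have "T v = 0"
      using sectional_ident[where u=v and v=v] that by simp
    then show ?thesis
      using sectional_ident[where u=u and v=v] that by simp
  qed
  obtain w where "eta_dot eta w w \<noteq> 0"
    using exists_nonisotropic[OF sym invertible_nonzero[OF nondeg]] by blast
  then have "tensor4 a u v u v = 0" for u v
    using continuous_eq_0_if_eq_0_on_nonisotropic[OF sym _ continuous_on_tensor4_sectional]
      nonisotropic by blast
  then show ?thesis
    using algebraic_curvature_tensor_eq_0[where a=a, OF anti2 pairsym cyclic] by blast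
qed

end
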